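(* Let $G$ be a $2$-connected bipartite graph of order $n\ge 9$. Then ${\rm cc}(G)\ge 8$. Moreover, ${\rm cc}(G)=8$ if and only if $G\in\mathscr{F}_n$.
   Context: All graphs are finite and simple. A cummerbund of a graph is a longest cycle; ${\rm cc}(G)$ is the number of vertices of $G$ lying in at least one cummerbund. The family $\mathscr{F}_n=\{G_{1,n},\dots,G_{7,n}\}$ is defined as follows: start with an $8$-cycle $v_1v_2\cdots v_8v_1$, add a chord set $E_i$, and add $n-8$ new pairwise nonadjacent vertices each adjacent exactly to $v_1$ and $v_5$. The chord sets are: $E_1=\emptyset$; $E_2=\{v_1v_4\}$; $E_3=\{v_1v_4,v_1v_6\}$; $E_4=\{v_1v_4,v_2v_5\}$; $E_5=\{v_1v_4,v_5v_8\}$; $E_6=\{v_1v_4,v_1v_6,v_2v_5\}$; $E_7=\{v_1v_4,v_1v_6,v_2v_5,v_5v_8\}$. (Equivalently, $G_{i,9}$ is the order-$9$ graph with one added vertex $v$ adjacent to $v_1,v_5$, and $G_{i,n}$ is obtained from it by duplicating $v$ $n-9$ times, where duplicating $v$ means adding a new vertex with neighborhood $N(v)$.) *)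

theory Defs
  imports Main
begin

definition simple_graph :: "'a set \<Rightarrow> ('a \<Rightarrow> 'a \<Rightarrow> bool) \<Rightarrow> bool" where
  "simple_graph V E \<longleftrightarrow> finite V \<and> (\<forall>x y. E x y \<longrightarrow> x \<in> V \<and> y \<in> V)
     \<and> (\<forall>x y. E x y \<longrightarrow> E y x) \<and> (\<forall>x. \<not> E x x)"

definition connected_on :: "'a set \<Rightarrow> ('a \<Rightarrow> 'a \<Rightarrow> bool) \<Rightarrow> bool" where
  "connected_on S E \<longleftrightarrow> S \<noteq> {} \<and>
     (\<forall>x\<in>S. \<forall>y\<in>S. (\<lambda>a b. E a b \<and> a \<in> S \<and> b \<in> S)\<^sup>*\<^sup>* x y)"

definition two_connected :: "'a set \<Rightarrow> ('a \<Rightarrow> 'a \<Rightarrow> bool) \<Rightarrow> bool" where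
  "two_connected V E \<longleftrightarrow> card V \<ge> 3 \<and> connected_on V E \<and> (\<forall>v\<in>V. connected_on (V - {v}) E)"

definition bipartite :: "'a set \<Rightarrow> ('a \<Rightarrow> 'a \<Rightarrow> bool) \<Rightarrow> bool" where
  "bipartite V E \<longleftrightarrow> (\<exists>A. A \<subseteq> V \<and> (\<forall>x y. E x y \<longrightarrow> (x \<in> A \<longleftrightarrow> y \<notin> A)))"

definition is_cycle :: "'a set \<Rightarrow> ('a \<Rightarrow> 'a \<Rightarrow> bool) \<Rightarrow> 'a list \<Rightarrow> bool" where
  "is_cycle V E c \<longleftrightarrow> length c \<ge> 3 \<and> distinct c \<and> set c \<subseteq> V \<and>
     (\<forall>i < length c. E (c ! i) (c ! ((i + 1) mod length c)))"

definition cummerbund :: "'a set \<Rightarrow> ('a \<Rightarrow> 'a \<Rightarrow> bool) \<Rightarrow> 'a list \<Rightarrow> bool" where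
  "cummerbund V E c \<longleftrightarrow> is_cycle V E c \<and> (\<forall>d. is_cycle V E d \<longrightarrow> length d \<le> length c)"

definition cc :: "'a set \<Rightarrow> ('a \<Rightarrow> 'a \<Rightarrow> bool) \<Rightarrow> nat" where
  "cc V E = card {v \<in> V. \<exists>c. cummerbund V E c \<and> v \<in> set c}"

definition graph_iso :: "'a set \<Rightarrow> ('a \<Rightarrow> 'a \<Rightarrow> bool) \<Rightarrow> 'b set \<Rightarrow> ('b \<Rightarrow> 'b \<Rightarrow> bool) \<Rightarrow> bool" where
  "graph_iso V E W F \<longleftrightarrow> (\<exists>f. bij_betw f V W \<and> (\<forall>x\<in>V. \<forall>y\<in>V. E x y \<longleftrightarrow> F (f x) (f y)))"

text \<open>The family F_n: vertices 1..n, v_k = k for k = 1..8, extra vertices 9..n.\<close>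
definition famV :: "nat \<Rightarrow> nat set" where
  "famV n = {1..n}"

definition fam_chords :: "nat \<Rightarrow> (nat \<times> nat) set" where
  "fam_chords i =
    (if i = 1 then {}
     else if i = 2 then {(1,4)}
     else if i = 3 then {(1,4),(1,6)}
     else if i = 4 then {(1,4),(2,5)}
     else if i = 5 then {(1,4),(5,8)}
     else if i = 6 then {(1,4),(1,6),(2,5)}
     else {(1,4),(1,6),(2,5),(5,8)})"

definition fam_base :: "nat \<Rightarrow> nat \<Rightarrow> (nat \<times> nat) set" where
  "fam_base i n = {(k, k + 1) | k. 1 \<le> k \<and> k \<le> 7} \<union> {(8, 1)} \<union> fam_chords i
     \<union> {(1, j) | j. 9 \<le> j \<and> j \<le> n} \<union> {(5, j) | j. 9 \<le> j \<and> j \<le> n}"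

definition famE :: "nat \<Rightarrow> nat \<Rightarrow> nat \<Rightarrow> nat \<Rightarrow> bool" where
  "famE i n x y \<longleftrightarrow> (x, y) \<in> fam_base i n \<or> (y, x) \<in> fam_base i n"

definition in_family_F :: "'a set \<Rightarrow> ('a \<Rightarrow> 'a \<Rightarrow> bool) \<Rightarrow> nat \<Rightarrow> bool" where
  "in_family_F V E n \<longleftrightarrow> (\<exists>i\<in>{1..7}. graph_iso V E (famV n) (famE i n))"

end

theory Submission
  imports Defs
begin

text \<open>
  Let c be a longest cycle. If a vertex z on no longest cycle is adjacent to c, 2-connectivity
  gives a path R through z that meets c only in its two ends. Closing R with either arc of c
  gives two cycles through z; they are even (bipartiteness) and not longest, hence each is
  shorter than c by at least 2, and adding both bounds gives 2|R| + 2 <= |c|, so |c| >= 8.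
  Hence if |c| < 8 every vertex lies on a longest cycle and cc = n >= 9, while otherwise
  cc >= |c| >= 8.

  If cc = 8, then |c| = 8 and the longest cycles cover exactly the vertices of c. The same
  counting shows that every vertex off c has exactly two neighbours, which are antipodal on c.
  Fix such a vertex x, adjacent to v1 and v5. Any further chord of c, and any neighbour pair
  other than {v1, v5} of another outside vertex, would violate the bipartition or create an
  8-cycle through x or a 10-cycle. So only the chords v1v4, v1v6, v2v5, v5v8 are optional,
  and up to the symmetries of the octagon fixing {v1, v5} their combinations are the seven
  graphs of the family.
  Conversely, in these graphs every cycle alternates between {v1, v3, v5, v7} and the rest,
  so longest cycles have length 8 and pass through v3 and v7, hence through all of v1..v8.
\<close>

lemma length_ge_2_if_hd_ne_last: "p \<noteq> [] \<Longrightarrow> hd p \<noteq> last p \<Longrightarrow> 2 \<le> length p"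
  by (cases p; cases "tl p") auto

lemma mod_gap_add_mod_gap:
  fixes i j L :: nat
  assumes "i < L" "j < L" "i \<noteq> j"
  shows "(i + L - j) mod L + (j + L - i) mod L = L"
proof (cases "i < j")
  case True
  have "j + L - i = (j - i) + L" using True by arith
  then have "(j + L - i) mod L = ((j - i) + L) mod L" by (simp only:)
  also have "\<dots> = j - i" using assms by simp
  finally show ?thesis using True assms by simp
next
  case False
  have "i + L - j = (i - j) + L" using False by arith
  then have "(i + L - j) mod L = ((i - j) + L) mod L" by (simp only:)
  also have "\<dots> = i - j" using assms by simp
  finally show ?thesis using False assms by simp
qed

lemma in_set_butlast_if_ne_last: "x \<in> set xs \<Longrightarrow> x \<noteq> last xs \<Longrightarrow> x \<in> set (butlast xs)"
  by (induction xs) auto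

lemma opposite_mod_8:
  fixes i j :: nat
  assumes "i < 8" "j < 8" "(i + 8 - j) mod 8 = 4"
  shows "j = (i + 4) mod 8"
proof -
  have "i \<in> {0..<8}" "j \<in> {0..<8}" using assms(1,2) by auto
  then show ?thesis using assms(3) by (simp add: atLeastLessThan_nat_numeral) (elim disjE; simp)
qed

lemma less_8_cases: "k < (8::nat) \<Longrightarrow> k = 0 \<or> k = 1 \<or> k = 2 \<or> k = 3 \<or> k = 4 \<or> k = 5 \<or> k = 6 \<or> k = 7"
  by arith

lemma all_less_8: "(\<forall>k<8. P k) \<longleftrightarrow> P 0 \<and> P 1 \<and> P 2 \<and> P 3 \<and> P 4 \<and> P 5 \<and> P 6 \<and> P (7::nat)"
  using less_8_cases by auto

lemma list_length_8_eq: "length l = 8 \<Longrightarrow> l = [l ! 0, l ! 1, l ! 2, l ! 3, l ! 4, l ! 5, l ! 6, l ! 7]"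
  by (simp add: list_eq_iff_nth_eq all_less_8)

lemma simple_graph_sym: "simple_graph V E \<Longrightarrow> E x y \<Longrightarrow> E y x"
  unfolding simple_graph_def by blast

lemma simple_graph_edge_in: "simple_graph V E \<Longrightarrow> E x y \<Longrightarrow> x \<in> V \<and> y \<in> V"
  unfolding simple_graph_def by blast

lemma simple_graph_irrefl: "simple_graph V E \<Longrightarrow> \<not> E x x"
  unfolding simple_graph_def by blast

lemma simple_graph_finite: "simple_graph V E \<Longrightarrow> finite V"
  unfolding simple_graph_def by blast

section \<open>Cycles and paths\<close>

lemma is_cycle_edge: "is_cycle V E c \<Longrightarrow> i < length c \<Longrightarrow> E (c ! i) (c ! ((i + 1) mod length c))"
  unfolding is_cycle_def by blast

lemma is_cycle_iff_successively:
  "is_cycle V E c \<longleftrightarrow>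
     length c \<ge> 3 \<and> distinct c \<and> set c \<subseteq> V \<and> successively E c \<and> E (last c) (hd c)"
proof
  assume cyc: "is_cycle V E c"
  then have len: "length c \<ge> 3" unfolding is_cycle_def by simp
  have "successively E c"
    unfolding successively_conv_nth using is_cycle_edge[OF cyc] by (metis Suc_eq_plus1 Suc_lessD mod_less)
  moreover have "E (last c) (hd c)"
  proof -
    have "Suc (length c - 1) = length c" "c \<noteq> []" using len by auto
    then show ?thesis
      using is_cycle_edge[OF cyc, of "length c - 1"] len by (simp add: last_conv_nth hd_conv_nth)
  qed
  ultimately show "length c \<ge> 3 \<and> distinct c \<and> set c \<subseteq> V \<and> successively E c \<and> E (last c) (hd c)"
    using cyc unfolding is_cycle_def by blast
next
  assume h: "length c \<ge> 3 \<and> distinct c \<and> set c \<subseteq> V \<and> successively E c \<and> E (last c) (hd c)"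
  have "E (c ! i) (c ! ((i + 1) mod length c))" if i: "i < length c" for i
  proof (cases "Suc i < length c")
    case True
    then show ?thesis using h successively_nth[of E c i] by simp
  next
    case False
    then have "i = length c - 1" "Suc i = length c" using i by auto
    moreover have "c \<noteq> []" using h by auto
    ultimately show ?thesis using h by (simp add: last_conv_nth hd_conv_nth)
  qed
  then show "is_cycle V E c" using h unfolding is_cycle_def by blast
qed

lemma is_cycle_length_le_card:
  assumes "is_cycle V E c" "finite V"
  shows "length c \<le> card V"
  using assms card_mono[of V "set c"] distinct_card[of c] unfolding is_cycle_def by simp

lemma is_cycle_rotate:
  assumes cyc: "is_cycle V E c"
  shows "is_cycle V E (rotate k c)"
  unfolding is_cycle_def
proof (intro conjI allI impI)
  show "3 \<le> length (rotate k c)" "distinct (rotate k c)" "set (rotate k c) \<subseteq> V"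
    using cyc unfolding is_cycle_def by auto
  fix i assume i: "i < length (rotate k c)"
  let ?L = "length c"
  have L: "?L > 0" "c \<noteq> []" using i by auto
  have "E (c ! ((k + i) mod ?L)) (c ! (((k + i) mod ?L + 1) mod ?L))"
    using is_cycle_edge[OF cyc] L by simp
  moreover have "((k + i) mod ?L + 1) mod ?L = (k + (i + 1) mod ?L) mod ?L"
    by (metis add.assoc mod_add_left_eq mod_add_right_eq)
  ultimately show "E (rotate k c ! i) (rotate k c ! ((i + 1) mod length (rotate k c)))"
    using i L by (simp add: nth_rotate)
qed

lemma card_cycle_inter_le_card_diff:
  assumes cyc: "is_cycle V E d" and cross: "\<forall>x y. E x y \<longrightarrow> (x \<in> Q \<longleftrightarrow> y \<notin> Q)"
  shows "card (set d \<inter> Q) \<le> card (set d - Q)"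
proof -
  define L where "L = length d"
  define I where "I = {k. k < L \<and> d ! k \<in> Q}"
  define J where "J = {k. k < L \<and> d ! k \<notin> Q}"
  have dist: "distinct d" and L: "L > 0" using cyc unfolding is_cycle_def L_def by auto
  have "set d \<inter> Q = (nth d) ` I" "set d - Q = (nth d) ` J"
    unfolding I_def J_def L_def by (auto simp: in_set_conv_nth)
  moreover have "inj_on (nth d) I" "inj_on (nth d) J"
    using inj_on_nth[OF dist] unfolding I_def J_def L_def by auto
  moreover have "card I \<le> card J"
  proof (rule card_inj_on_le)
    show "inj_on (\<lambda>k. Suc k mod L) I"
      unfolding I_def inj_on_def by (auto simp: mod_if split: if_splits)
    show "(\<lambda>k. Suc k mod L) ` I \<subseteq> J"
      using is_cycle_edge[OF cyc] cross L unfolding I_def J_def L_def by auto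
    show "finite J" unfolding J_def by simp
  qed
  ultimately show ?thesis by (simp add: card_image)
qed

lemma card_cycle_inter_eq_card_diff:
  assumes cyc: "is_cycle V E d" and cross: "\<forall>x y. E x y \<longrightarrow> (x \<in> Q \<longleftrightarrow> y \<notin> Q)"
  shows "card (set d \<inter> Q) = card (set d - Q)"
proof -
  have "\<forall>x y. E x y \<longrightarrow> (x \<in> - Q \<longleftrightarrow> y \<notin> - Q)" using cross by auto
  then have "card (set d \<inter> - Q) \<le> card (set d - - Q)"
    by (rule card_cycle_inter_le_card_diff[OF cyc])
  moreover have "set d \<inter> - Q = set d - Q" "set d - - Q = set d \<inter> Q" by auto
  ultimately show ?thesis using card_cycle_inter_le_card_diff[OF cyc cross] by simp
qed

lemma length_cycle_eq_card_sides:
  assumes "is_cycle V E d"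
  shows "length d = card (set d \<inter> Q) + card (set d - Q)"
  using assms card_Int_Diff[of "set d" Q] distinct_card unfolding is_cycle_def by fastforce

lemma bipartite_cycle_even:
  assumes "bipartite V E" "is_cycle V E d"
  shows "even (length d)"
proof -
  obtain A where "\<forall>x y. E x y \<longrightarrow> (x \<in> A \<longleftrightarrow> y \<notin> A)"
    using assms(1) unfolding bipartite_def by blast
  then show ?thesis
    using card_cycle_inter_eq_card_diff[OF assms(2), of A] length_cycle_eq_card_sides[OF assms(2), of A]
    by simp
qed

lemma cycle_neighbours:
  assumes cyc: "is_cycle V E d" and v: "v \<in> set d" and sym: "\<And>x y. E x y \<Longrightarrow> E y x"
  shows "\<exists>a b. a \<noteq> b \<and> a \<in> set d \<and> b \<in> set d \<and> E v a \<and> E v b"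
proof -
  obtain k where k: "k < length d" "d ! k = v" using v by (metis in_set_conv_nth)
  define r where "r = rotate k d"
  have "is_cycle V E r" using is_cycle_rotate[OF cyc] r_def by simp
  then have r: "length r \<ge> 3" "successively E r" "distinct r" "E (last r) (hd r)"
    unfolding is_cycle_iff_successively by auto
  have "d \<noteq> []" using k by auto
  then have "hd r = v"
    using k hd_conv_nth[of r] nth_rotate[of 0 d k] unfolding r_def by auto
  then obtain a t where "r = v # a # t" "t \<noteq> []"
    using r(1) by (cases r; cases "tl r") (auto simp: Suc_le_eq)
  moreover have "set r = set d" using r_def by simp
  ultimately show ?thesis using r sym by (intro exI[of _ a] exI[of _ "last t"]) auto
qed

definition path_in :: "'a set \<Rightarrow> ('a \<Rightarrow> 'a \<Rightarrow> bool) \<Rightarrow> 'a list \<Rightarrow> bool" where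
  "path_in W E p \<longleftrightarrow> p \<noteq> [] \<and> distinct p \<and> set p \<subseteq> W \<and> successively E p"

lemma connected_on_path_to:
  assumes con: "connected_on W E" and x: "x \<in> W" and s: "s \<in> S" "s \<in> W"
  shows "\<exists>p. path_in W E p \<and> hd p = x \<and> last p \<in> S \<and> (\<forall>v\<in>set p. v \<in> S \<longrightarrow> v = last p)"
proof -
  let ?R = "\<lambda>a b. E a b \<and> a \<in> W \<and> b \<in> W"
  have "?R\<^sup>*\<^sup>* x s" using con x s unfolding connected_on_def by blast
  then show ?thesis
  proof (induction rule: converse_rtranclp_induct)
    case base
    then show ?case using s by (intro exI[of _ "[s]"]) (auto simp: path_in_def)
  next
    case (step a b)
    then obtain p where p: "path_in W E p" "hd p = b" "last p \<in> S" "\<forall>v\<in>set p. v \<in> S \<longrightarrow> v = last p"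
      by blast
    consider "a \<in> S" | "a \<notin> S" "a \<in> set p" | "a \<notin> S" "a \<notin> set p" by blast
    then show ?case
    proof cases
      case 1
      then show ?thesis using step by (intro exI[of _ "[a]"]) (auto simp: path_in_def)
    next
      case 2
      then obtain ys zs where split: "p = ys @ a # zs" by (meson split_list)
      then have "path_in W E (a # zs)"
        using p(1) unfolding path_in_def by (auto simp: successively_append_iff)
      then show ?thesis using p split by (intro exI[of _ "a # zs"]) auto
    next
      case 3
      then have "path_in W E (a # p)"
        using p step unfolding path_in_def by (auto simp: successively_Cons)
      then show ?thesis using p 3 unfolding path_in_def by (intro exI[of _ "a # p"]) auto
    qed
  qed
qed

lemma connected_on_crossing_edge:
  assumes con: "connected_on V E" and "U \<subseteq> V" "u \<in> U" "z \<in> V - U"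
  shows "\<exists>x\<in>U. \<exists>y\<in>V - U. E x y"
proof -
  have "(\<lambda>a b. E a b \<and> a \<in> V \<and> b \<in> V)\<^sup>*\<^sup>* u z" using con assms unfolding connected_on_def by blast
  then show ?thesis
    using assms(3)
  proof (induction rule: converse_rtranclp_induct)
    case base
    then show ?case using assms(4) by blast
  next
    case (step a b)
    then show ?case using assms(4) by (cases "b \<in> U") auto
  qed
qed

lemma two_connected_has_cycle:
  assumes simple: "simple_graph V E" and tc: "two_connected V E"
  shows "\<exists>c. is_cycle V E c"
proof -
  have fin: "finite V" using simple simple_graph_finite by blast
  have card: "card V \<ge> 3" and con: "connected_on V E" and cut: "\<forall>v\<in>V. connected_on (V - {v}) E"
    using tc unfolding two_connected_def by auto
  have third: "\<exists>t\<in>V. t \<noteq> a \<and> t \<noteq> b" for a b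
  proof (rule ccontr)
    assume "\<not> ?thesis"
    then have "card V \<le> card {a, b}" using fin by (intro card_mono) auto
    also have "\<dots> \<le> 2" by (simp add: card_insert_le_m1)
    finally show False using card by simp
  qed
  have neighbour: "\<exists>y\<in>W. E x y" if "connected_on W E" "x \<in> W" "t \<in> W" "t \<noteq> x" for W x t
  proof -
    have "(\<lambda>a b. E a b \<and> a \<in> W \<and> b \<in> W)\<^sup>*\<^sup>* x t" using that unfolding connected_on_def by blast
    then show ?thesis using that(4) by (cases rule: converse_rtranclpE) auto
  qed
  obtain u where u: "u \<in> V" using card by fastforce
  obtain v where v: "v \<in> V" "E u v" using third[of u u] neighbour[OF con u] by blast
  have "u \<noteq> v" using v simple_graph_irrefl[OF simple] by auto
  moreover obtain t where "t \<in> V" "t \<noteq> u" "t \<noteq> v" using third[of u v] by blast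
  ultimately obtain w where w: "w \<in> V - {v}" "E u w"
    using neighbour[OF cut[rule_format, OF v(1)], of u t] u by auto
  have "u \<noteq> w" using w simple_graph_irrefl[OF simple] by auto
  with \<open>u \<noteq> v\<close> obtain p where p: "path_in (V - {u}) E p" "hd p = v" "last p = w"
    using connected_on_path_to[OF cut[rule_format, OF u], of v w "{w}"] v w by blast
  have "2 \<le> length p" using p w length_ge_2_if_hd_ne_last[of p] unfolding path_in_def by auto
  moreover have "E (last (u # p)) (hd (u # p))"
    using p w simple_graph_sym[OF simple] unfolding path_in_def by auto
  ultimately have "is_cycle V E (u # p)"
    using p u v unfolding is_cycle_iff_successively path_in_def by (auto simp: successively_Cons)
  then show ?thesis by blast
qed

lemma cummerbund_exists:
  assumes "finite V" "is_cycle V E c0"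
  shows "\<exists>c. cummerbund V E c"
proof -
  let ?S = "length ` {c. is_cycle V E c}"
  have "?S \<subseteq> {..card V}" using is_cycle_length_le_card[OF _ assms(1)] by auto
  then have fin: "finite ?S" by (rule finite_subset) simp
  moreover have "?S \<noteq> {}" using assms(2) by blast
  ultimately have "Max ?S \<in> ?S" by (rule Max_in)
  then obtain c where c: "is_cycle V E c" "length c = Max ?S" by auto
  have "length d \<le> length c" if "is_cycle V E d" for d
    unfolding c(2) using that by (intro Max_ge[OF fin]) simp
  then show ?thesis using c(1) unfolding cummerbund_def by blast
qed

section \<open>Longest cycles and ears\<close>

definition cummerbund_vertices :: "'a set \<Rightarrow> ('a \<Rightarrow> 'a \<Rightarrow> bool) \<Rightarrow> 'a set" where
  "cummerbund_vertices V E = {v \<in> V. \<exists>c. cummerbund V E c \<and> v \<in> set c}"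

lemma cc_eq_card_cummerbund_vertices: "cc V E = card (cummerbund_vertices V E)"
  unfolding cc_def cummerbund_vertices_def by simp

lemma cummerbund_vertices_subset: "cummerbund_vertices V E \<subseteq> V"
  unfolding cummerbund_vertices_def by blast

lemma set_cummerbund_subset: "cummerbund V E c \<Longrightarrow> set c \<subseteq> cummerbund_vertices V E"
  unfolding cummerbund_vertices_def cummerbund_def is_cycle_def by blast

definition ear :: "'a set \<Rightarrow> ('a \<Rightarrow> 'a \<Rightarrow> bool) \<Rightarrow> 'a list \<Rightarrow> 'a list \<Rightarrow> bool" where
  "ear V E c R \<longleftrightarrow> path_in V E R \<and> length R \<ge> 3 \<and> hd R \<in> set c \<and> last R \<in> set c
     \<and> (\<forall>v\<in>set R. v \<in> set c \<longrightarrow> v = hd R \<or> v = last R)"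

lemma ear_rev:
  assumes "ear V E c R" "\<And>x y. E x y \<Longrightarrow> E y x"
  shows "ear V E c (rev R)"
proof -
  have "successively E R" using assms(1) unfolding ear_def path_in_def by blast
  then have "successively (\<lambda>x y. E y x) R" using assms(2) by (rule successively_mono)
  then show ?thesis using assms(1) unfolding ear_def path_in_def by (auto simp: hd_rev last_rev)
qed

text \<open>Here (i + length c - j) mod length c is the number of steps along c from c ! j
  forward to c ! i.\<close>

lemma cycle_arc:
  assumes cyc: "is_cycle V E c" and ij: "i < length c" "j < length c" "i \<noteq> j"
  obtains A where "A \<noteq> []" "distinct A" "successively E A" "set A \<subseteq> set c"
    "length A = (i + length c - j) mod length c" "hd A = c ! j" "E (last A) (c ! i)" "c ! i \<notin> set A"
proof -
  define L where "L = length c"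
  define d where "d = (i + L - j) mod L"
  define r where "r = rotate j c"
  have "d = (if j \<le> i then i - j else i + L - j)"
  proof (cases "j \<le> i")
    case True
    have "i + L - j = (i - j) + L" using True by simp
    moreover have "((i - j) + L) mod L = i - j" using ij unfolding L_def by simp
    ultimately show ?thesis using True unfolding d_def by simp
  qed (use ij in \<open>simp add: d_def L_def\<close>)
  then have d: "0 < d" "d < L" "(j + d) mod L = i"
    using ij unfolding L_def by auto
  have r: "length r = L" "set r = set c" "distinct r" "successively E r" "r \<noteq> []"
    using is_cycle_rotate[OF cyc] d unfolding r_def L_def is_cycle_iff_successively by auto
  have "c \<noteq> []" using ij by auto
  then have r_nth: "r ! d = c ! i" "r ! 0 = c ! j"
    using d ij nth_rotate[of d c j] nth_rotate[of 0 c j] unfolding r_def L_def by auto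
  have "distinct (take d r @ r ! d # drop (Suc d) r)"
    using r(3) id_take_nth_drop[of d r] d r(1) by simp
  then have "distinct (take d r)" "c ! i \<notin> set (take d r)" using r_nth by auto
  moreover have "take d r \<noteq> []" "set (take d r) \<subseteq> set c" "length (take d r) = d"
    "hd (take d r) = c ! j"
    using r d r_nth by (auto simp: hd_conv_nth dest: in_set_takeD)
  moreover have "successively E (take d r)"
    using r(4) append_take_drop_id[of d r] successively_append_iff by metis
  moreover have "E (last (take d r)) (c ! i)"
    using successively_nth[OF r(4), of "d - 1"] d r(1,5) r_nth by (simp add: last_conv_nth)
  ultimately show ?thesis using that unfolding d_def L_def by blast
qed

lemma cycle_from_ear:
  assumes cyc: "is_cycle V E c" and R: "ear V E c R"
    and ij: "i < length c" "j < length c" "hd R = c ! i" "last R = c ! j"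
  shows "\<exists>D. is_cycle V E D \<and> length D = length R - 1 + (i + length c - j) mod length c
             \<and> set (butlast R) \<subseteq> set D"
proof -
  have R': "path_in V E R" "length R \<ge> 3" "\<forall>v\<in>set R. v \<in> set c \<longrightarrow> v = c ! i \<or> v = c ! j"
    using R ij unfolding ear_def by auto
  have "hd R \<noteq> last R" using R'(1,2) unfolding path_in_def by (cases R) auto
  then have "i \<noteq> j" using ij by auto
  then obtain A where A: "A \<noteq> []" "distinct A" "successively E A" "set A \<subseteq> set c"
      "length A = (i + length c - j) mod length c" "hd A = c ! j" "E (last A) (c ! i)" "c ! i \<notin> set A"
    using cycle_arc[OF cyc ij(1,2)] by blast
  define B where "B = butlast R"
  have "R \<noteq> []" using R'(2) by auto
  then have R_eq: "R = B @ [c ! j]" "B \<noteq> []"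
    using R'(2) ij(4) append_butlast_last_id[of R] unfolding B_def by auto
  then have B: "distinct B" "successively E B" "set B \<subseteq> V" "length B = length R - 1"
      "hd B = c ! i" "E (last B) (c ! j)" "\<forall>v\<in>set B. v \<in> set c \<longrightarrow> v = c ! i"
    using R' ij(3) unfolding path_in_def
    by (auto simp: successively_append_iff)
  have "set B \<inter> set A = {}" using B(7) A(4,8) by blast
  moreover have "length (B @ A) \<ge> 3" using A(1) B(4) R'(2) by (cases A) auto
  ultimately have "is_cycle V E (B @ A)"
    unfolding is_cycle_iff_successively using A B R_eq(2) cyc
    by (auto simp: successively_append_iff is_cycle_def)
  then show ?thesis using A(5) B(4) by (intro exI[of _ "B @ A"]) (auto simp: B_def)
qed

lemma cummerbund_length_le_cc:
  assumes "finite V" "cummerbund V E c"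
  shows "length c \<le> cc V E"
proof -
  have "distinct c" using assms(2) unfolding cummerbund_def is_cycle_def by blast
  then have "length c = card (set c)" by (simp add: distinct_card)
  also have "\<dots> \<le> cc V E"
    unfolding cc_eq_card_cummerbund_vertices
    using set_cummerbund_subset[OF assms(2)] finite_subset[OF cummerbund_vertices_subset assms(1)]
    by (rule card_mono[rotated])
  finally show ?thesis .
qed

locale bipartite_graph =
  fixes V :: "'a set" and E :: "'a \<Rightarrow> 'a \<Rightarrow> bool"
  assumes simple: "simple_graph V E" and bip: "bipartite V E"
begin

lemma sym: "E x y \<Longrightarrow> E y x"
  using simple simple_graph_sym by metis

lemma edge_in: "E x y \<Longrightarrow> x \<in> V \<and> y \<in> V"
  using simple simple_graph_edge_in by metis

lemma irrefl: "\<not> E x x"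
  using simple simple_graph_irrefl by metis

lemma finite_V: "finite V"
  using simple simple_graph_finite by metis

lemma cycle_through_outside_shorter:
  assumes cb: "cummerbund V E c" and D: "is_cycle V E D"
    and z: "z \<in> set D" "z \<notin> cummerbund_vertices V E"
  shows "length D + 2 \<le> length c"
proof -
  have "length D \<le> length c" using cb D unfolding cummerbund_def by blast
  moreover have "length D \<noteq> length c"
  proof
    assume "length D = length c"
    then have "cummerbund V E D" using cb D unfolding cummerbund_def by simp
    then show False using z set_cummerbund_subset by blast
  qed
  moreover have "even (length D)" "even (length c)"
    using bipartite_cycle_even[OF bip] D cb unfolding cummerbund_def by auto
  ultimately show ?thesis by presburger
qed

lemma ear_gap_bound:
  assumes cb: "cummerbund V E c" and R: "ear V E c R"
    and ij: "i < length c" "j < length c" "hd R = c ! i" "last R = c ! j"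
    and z: "z \<in> set R" "z \<notin> cummerbund_vertices V E"
  shows "length R + (i + length c - j) mod length c + 1 \<le> length c"
proof -
  have cyc: "is_cycle V E c" using cb unfolding cummerbund_def by blast
  obtain D where D: "is_cycle V E D" "length D = length R - 1 + (i + length c - j) mod length c"
    "set (butlast R) \<subseteq> set D"
    using cycle_from_ear[OF cyc R ij] by blast
  have "c ! j \<in> cummerbund_vertices V E" using nth_mem[OF ij(2)] set_cummerbund_subset[OF cb] by blast
  then have "z \<noteq> last R" using z(2) ij(4) by auto
  then have "z \<in> set (butlast R)" by (rule in_set_butlast_if_ne_last[OF z(1)])
  then have "length D + 2 \<le> length c" using cycle_through_outside_shorter[OF cb D(1)] D(3) z(2) by blast
  moreover have "length R \<ge> 3" using R unfolding ear_def by blast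
  ultimately show ?thesis using D(2) by linarith
qed

text \<open>The last claim adds the first two: the two arcs of c between the ends of R have
  lengths summing to length c.\<close>

lemma ear_length_bound:
  assumes cb: "cummerbund V E c" and R: "ear V E c R"
    and ij: "i < length c" "j < length c" "hd R = c ! i" "last R = c ! j"
    and z: "z \<in> set R" "z \<notin> cummerbund_vertices V E"
  shows "length R + (i + length c - j) mod length c + 1 \<le> length c"
    and "length R + (j + length c - i) mod length c + 1 \<le> length c"
    and "2 * length R + 2 \<le> length c"
proof -
  show 1: "length R + (i + length c - j) mod length c + 1 \<le> length c"
    by (rule ear_gap_bound[OF assms])
  have "ear V E c (rev R)" using ear_rev[OF R sym] .
  then show 2: "length R + (j + length c - i) mod length c + 1 \<le> length c"
    using ear_gap_bound[of c "rev R" j i z] cb ij z by (simp add: hd_rev last_rev)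
  have "hd R \<noteq> last R" using R unfolding ear_def path_in_def by (cases R) auto
  then have "i \<noteq> j" using ij by auto
  then show "2 * length R + 2 \<le> length c" using 1 2 mod_gap_add_mod_gap[OF ij(1,2)] by linarith
qed

end

locale two_connected_bipartite_graph = bipartite_graph +
  assumes two_conn: "two_connected V E"
begin

lemma connected: "connected_on V E"
  using two_conn unfolding two_connected_def by blast

lemma connected_Diff: "v \<in> V \<Longrightarrow> connected_on (V - {v}) E"
  using two_conn unfolding two_connected_def by blast

lemma ear_through_neighbour:
  assumes cyc: "is_cycle V E c" and u: "u \<in> set c" and z: "z \<in> V" "z \<notin> set c" and uz: "E u z"
  shows "\<exists>R. ear V E c R \<and> hd R = u \<and> R ! 1 = z"
proof -
  obtain s where s: "s \<in> set c" "E u s"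
    using cycle_neighbours[OF cyc u sym] by blast
  have "u \<in> V" "s \<in> V - {u}" "z \<in> V - {u}"
    using s z uz edge_in irrefl by auto
  then obtain p where p: "path_in (V - {u}) E p" "hd p = z" "last p \<in> set c"
    "\<forall>v\<in>set p. v \<in> set c \<longrightarrow> v = last p"
    using connected_on_path_to[OF connected_Diff, of u z s "set c"] s by blast
  have "p \<noteq> []" using p(1) unfolding path_in_def by blast
  then have "2 \<le> length p" using p(2,3) z(2) length_ge_2_if_hd_ne_last by metis
  moreover have "path_in V E (u # p)"
    using p(1,2) uz \<open>u \<in> V\<close> \<open>p \<noteq> []\<close> unfolding path_in_def by (auto simp: successively_Cons)
  ultimately have "ear V E c (u # p)" using p(3,4) u \<open>p \<noteq> []\<close> unfolding ear_def by auto
  moreover have "(u # p) ! 1 = z" using p(2) \<open>p \<noteq> []\<close> by (cases p) auto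
  ultimately show ?thesis by (intro exI[of _ "u # p"]) simp
qed

lemma cummerbund_long_if_outside_neighbour:
  assumes cb: "cummerbund V E c" and u: "u \<in> set c"
    and z: "z \<in> V" "z \<notin> cummerbund_vertices V E" and uz: "E u z"
  shows "8 \<le> length c"
proof -
  have cyc: "is_cycle V E c" using cb unfolding cummerbund_def by blast
  have "z \<notin> set c" using z(2) set_cummerbund_subset[OF cb] by blast
  then obtain R where R: "ear V E c R" "hd R = u" "R ! 1 = z"
    using ear_through_neighbour[OF cyc u z(1) _ uz] by blast
  obtain i where i: "i < length c" "c ! i = u" using u by (metis in_set_conv_nth)
  have "last R \<in> set c" using R(1) unfolding ear_def by blast
  then obtain j where j: "j < length c" "c ! j = last R" by (metis in_set_conv_nth)
  have ij: "i < length c" "j < length c" "hd R = c ! i" "last R = c ! j"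
    using i j R(2) by auto
  have "length R \<ge> 3" using R(1) unfolding ear_def by blast
  then have "z \<in> set R" using R(3) nth_mem[of 1 R] by simp
  then have "2 * length R + 2 \<le> length c" using ear_length_bound(3)[OF cb R(1) ij _ z(2)] by blast
  then show ?thesis using \<open>length R \<ge> 3\<close> by linarith
qed

lemma cummerbund_vertices_eq_if_short:
  assumes cb: "cummerbund V E c" and short: "length c < 8"
  shows "cummerbund_vertices V E = V"
proof (rule ccontr)
  assume "cummerbund_vertices V E \<noteq> V"
  with cummerbund_vertices_subset have "cummerbund_vertices V E \<subset> V" by (rule psubsetI)
  then obtain z where z: "z \<in> V - cummerbund_vertices V E" using psubset_imp_ex_mem by blast
  have "c \<noteq> []" using cb unfolding cummerbund_def is_cycle_def by auto
  then have "hd c \<in> cummerbund_vertices V E" using set_cummerbund_subset[OF cb] by auto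
  then obtain x y where xy: "x \<in> cummerbund_vertices V E" "y \<in> V - cummerbund_vertices V E" "E x y"
    using connected_on_crossing_edge[OF connected cummerbund_vertices_subset _ z] by blast
  then obtain c' where c': "cummerbund V E c'" "x \<in> set c'" unfolding cummerbund_vertices_def by blast
  have "length c' \<le> length c" "length c \<le> length c'" using cb c'(1) unfolding cummerbund_def by blast+
  moreover have "8 \<le> length c'"
    using xy(2,3) by (intro cummerbund_long_if_outside_neighbour[OF c']) auto
  ultimately show False using short by linarith
qed

lemma obtain_cummerbund:
  obtains c where "cummerbund V E c"
  using cummerbund_exists[OF finite_V] two_connected_has_cycle[OF simple two_conn] by blast

lemma cc_ge_8:
  assumes "9 \<le> card V"
  shows "8 \<le> cc V E"
proof -
  obtain c where cb: "cummerbund V E c" by (rule obtain_cummerbund)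
  show ?thesis
  proof (cases "length c < 8")
    case True
    then show ?thesis
      using cummerbund_vertices_eq_if_short[OF cb] assms unfolding cc_eq_card_cummerbund_vertices by simp
  next
    case False
    then show ?thesis using cummerbund_length_le_cc[OF finite_V cb] by simp
  qed
qed

lemma cc_eq_8_cummerbund:
  assumes "9 \<le> card V" "cc V E = 8"
  obtains c where "cummerbund V E c" "length c = 8" "cummerbund_vertices V E = set c"
proof -
  obtain c where cb: "cummerbund V E c" by (rule obtain_cummerbund)
  have "\<not> length c < 8"
    using cummerbund_vertices_eq_if_short[OF cb] assms unfolding cc_eq_card_cummerbund_vertices by auto
  then have len: "length c = 8" using cummerbund_length_le_cc[OF finite_V cb] assms(2) by simp
  have "distinct c" using cb unfolding cummerbund_def is_cycle_def by blast
  then have "card (set c) = 8" using len by (simp add: distinct_card)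
  then have "set c = cummerbund_vertices V E"
    using assms(2) set_cummerbund_subset[OF cb] finite_subset[OF cummerbund_vertices_subset finite_V]
    unfolding cc_eq_card_cummerbund_vertices by (intro card_subset_eq) auto
  then show ?thesis using that cb len by simp
qed

end

section \<open>Longest cycles of length 8\<close>

locale octagon_core = two_connected_bipartite_graph +
  fixes c :: "'a list"
  assumes cummerbund_c: "cummerbund V E c" and length_c: "length c = 8"
    and cummerbund_vertices_eq: "cummerbund_vertices V E = set c"
begin

lemma cycle_c: "is_cycle V E c"
  using cummerbund_c unfolding cummerbund_def by blast

lemma distinct_c: "distinct c" and set_c_subset: "set c \<subseteq> V"
  using cycle_c unfolding is_cycle_def by blast+

lemma cycle_length_le_8: "is_cycle V E D \<Longrightarrow> length D \<le> 8"
  using cummerbund_c length_c unfolding cummerbund_def by metis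

lemma cycle_length_8_subset:
  assumes "is_cycle V E D" "length D = 8"
  shows "set D \<subseteq> set c"
proof -
  have "cummerbund V E D" using assms cycle_length_le_8 unfolding cummerbund_def by simp
  then show ?thesis using set_cummerbund_subset cummerbund_vertices_eq by blast
qed

lemma octagon_core_relabel:
  assumes "is_cycle V E l" "set l = set c" "length l = 8"
  shows "octagon_core V E l"
proof unfold_locales
  show "cummerbund V E l" using assms cycle_length_le_8 unfolding cummerbund_def by simp
qed (use assms simple bip two_conn cummerbund_vertices_eq in auto)

lemma ear_off_cycle:
  assumes R: "ear V E c R" and ij: "i < 8" "j < 8" "hd R = c ! i" "last R = c ! j"
    and z: "z \<in> set R" "z \<notin> set c"
  shows "length R = 3" and "j = (i + 4) mod 8"
proof -
  have ij': "i < length c" "j < length c" using ij length_c by auto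
  have z': "z \<notin> cummerbund_vertices V E" using z cummerbund_vertices_eq by simp
  note bounds = ear_length_bound[OF cummerbund_c R ij' ij(3,4) z(1) z', unfolded length_c]
  have "hd R \<noteq> last R" using R unfolding ear_def path_in_def by (cases R) auto
  then have "i \<noteq> j" using ij by auto
  then have "(i + 8 - j) mod 8 + (j + 8 - i) mod 8 = 8" using mod_gap_add_mod_gap ij by blast
  moreover have "length R \<ge> 3" using R unfolding ear_def by blast
  ultimately show "length R = 3" and "j = (i + 4) mod 8"
    using bounds opposite_mod_8[OF ij(1,2)] by linarith+
qed

lemma common_neighbours_opposite:
  assumes z: "z \<in> V" "z \<notin> set c" and ki: "k < 8" "i < 8" "k \<noteq> i"
    and e: "E z (c ! k)" "E z (c ! i)"
  shows "i = (k + 4) mod 8"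
proof -
  have "c ! k \<noteq> c ! i" using distinct_c ki length_c nth_eq_iff_index_eq by fastforce
  moreover have "c ! k \<in> set c" "c ! i \<in> set c" using ki length_c by auto
  ultimately have "ear V E c [c ! k, z, c ! i]"
    using z e sym set_c_subset unfolding ear_def path_in_def by auto
  then show ?thesis using ear_off_cycle(2)[OF _ ki(1,2), of _ z] z by simp
qed

lemma outside_neighbour_opposite:
  assumes z: "z \<in> V" "z \<notin> set c" and i: "i < 8" and e: "E (c ! i) z"
  shows "E z (c ! ((i + 4) mod 8))"
proof -
  obtain R where R: "ear V E c R" "hd R = c ! i" "R ! 1 = z"
    using ear_through_neighbour[OF cycle_c _ z e] i length_c by auto
  have "last R \<in> set c" using R(1) unfolding ear_def by blast
  then obtain j where j: "j < 8" "last R = c ! j" using length_c by (metis in_set_conv_nth)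
  have "length R \<ge> 3" using R(1) unfolding ear_def by blast
  then have "z \<in> set R" using R(3) nth_mem[of 1 R] by simp
  then have len: "length R = 3" and opp: "j = (i + 4) mod 8"
    using ear_off_cycle[OF R(1) i j(1) R(2) j(2)] z(2) by blast+
  then obtain a b d where "R = [a, b, d]" by (auto simp: length_Suc_conv numeral_3_eq_3)
  then have "R = [c ! i, z, c ! j]" using R(2,3) j(2) by simp
  then show ?thesis using R(1) opp unfolding ear_def path_in_def by auto
qed

text \<open>Otherwise a path from y back to c avoiding z, prefixed by z and by a second neighbour
  of z on c, would be an ear of length at least 4 through z.\<close>

lemma outside_neighbours_on_cycle:
  assumes z: "z \<in> V" "z \<notin> set c" and i: "i < 8" and e: "E z (c ! i)" and y: "y \<notin> set c"
  shows "\<not> E z y"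
proof
  assume zy: "E z y"
  have "y \<in> V - {z}" "c ! 0 \<in> V - {z}" "c ! 0 \<in> set c"
    using zy edge_in irrefl length_c set_c_subset z by auto
  then obtain p where p: "path_in (V - {z}) E p" "hd p = y" "last p \<in> set c"
      "\<forall>v\<in>set p. v \<in> set c \<longrightarrow> v = last p"
    using connected_on_path_to[OF connected_Diff[OF z(1)], of y "c ! 0" "set c"] by blast
  obtain m where m: "m < 8" "last p = c ! m" using p(3) length_c by (metis in_set_conv_nth)
  have "\<exists>k<8. k \<noteq> m \<and> E z (c ! k)"
  proof (cases "i = m")
    case True
    have "(i + 4) mod 8 < 8" "(i + 4) mod 8 \<noteq> i" by presburger+
    then show ?thesis using True outside_neighbour_opposite[OF z i sym[OF e]] by blast
  qed (use i e in blast)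
  then obtain k where k: "k < 8" "k \<noteq> m" "E z (c ! k)" by blast
  have "p \<noteq> []" using p(1) unfolding path_in_def by blast
  then have "2 \<le> length p" using p(2,3) y length_ge_2_if_hd_ne_last by metis
  have "c ! k \<noteq> c ! m" using distinct_c k m length_c nth_eq_iff_index_eq by fastforce
  then have "c ! k \<notin> set p" using p(4) m(2) k(1) length_c by auto
  then have ear: "ear V E c (c ! k # z # p)"
    using p zy k(1,3) z sym length_c set_c_subset \<open>p \<noteq> []\<close> \<open>2 \<le> length p\<close>
    unfolding ear_def path_in_def by (auto simp: successively_Cons)
  have "hd (c ! k # z # p) = c ! k" "last (c ! k # z # p) = c ! m" "z \<in> set (c ! k # z # p)"
    using m(2) \<open>p \<noteq> []\<close> by auto
  then have "length (c ! k # z # p) = 3" using ear_off_cycle(1)[OF ear k(1) m(1)] z(2) by blast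
  then show False using \<open>2 \<le> length p\<close> by simp
qed

lemma outside_adjacent_to_cycle:
  assumes z: "z \<in> V" "z \<notin> set c"
  shows "\<exists>i<8. E z (c ! i)"
proof (rule ccontr)
  assume no: "\<not> ?thesis"
  define U where "U = set c \<union> {w \<in> V. \<exists>i<8. E w (c ! i)}"
  have "U \<subseteq> V" "c ! 0 \<in> U" "z \<in> V - U"
    using set_c_subset length_c z no unfolding U_def by auto
  then obtain x y where xy: "x \<in> U" "y \<in> V - U" "E x y"
    using connected_on_crossing_edge[OF connected] by blast
  show False
  proof (cases "x \<in> set c")
    case True
    then obtain i where "i < 8" "x = c ! i" using length_c by (metis in_set_conv_nth)
    then show False using xy sym unfolding U_def by blast
  next
    case False
    then obtain i where "i < 8" "E x (c ! i)" using xy(1) unfolding U_def by blast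
    then show False using outside_neighbours_on_cycle[of x i y] xy False unfolding U_def by blast
  qed
qed

lemma outside_neighbourhood:
  assumes z: "z \<in> V" "z \<notin> set c"
  obtains i where "i < 8" "\<And>v. E z v \<longleftrightarrow> v = c ! i \<or> v = c ! ((i + 4) mod 8)"
proof -
  obtain i where i: "i < 8" "E z (c ! i)" using outside_adjacent_to_cycle[OF z] by blast
  have opp: "E z (c ! ((i + 4) mod 8))" using outside_neighbour_opposite[OF z i(1) sym[OF i(2)]] .
  have "v = c ! i \<or> v = c ! ((i + 4) mod 8)" if "E z v" for v
  proof -
    have "v \<in> set c" using outside_neighbours_on_cycle[OF z i] that by blast
    then obtain k where k: "k < 8" "v = c ! k" using length_c by (metis in_set_conv_nth)
    then show ?thesis
      using common_neighbours_opposite[OF z i(1) k(1) _ i(2)] that by (cases "k = i") auto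
  qed
  then show ?thesis using that i opp by blast
qed

end

section \<open>The family\<close>

lemma famE_sym: "famE i n a b \<Longrightarrow> famE i n b a"
  unfolding famE_def by blast

lemma fam_chordsD:
  "(a, b) \<in> fam_chords i \<Longrightarrow> a = 1 \<and> b = 4 \<or> a = 1 \<and> b = 6 \<or> a = 2 \<and> b = 5 \<or> a = 5 \<and> b = 8"
  unfolding fam_chords_def by (auto split: if_splits)

lemma fam_chords_nonchord:
  "(a, b) \<notin> {(1,4), (1,6), (2,5), (5,8)} \<Longrightarrow> (a, b) \<notin> fam_chords i"
  using fam_chordsD by blast

lemma mem_fam_base_iff:
  "(a, b) \<in> fam_base i n \<longleftrightarrow> (1 \<le> a \<and> a \<le> 7 \<and> b = a + 1) \<or> (a = 8 \<and> b = 1) \<or> (a, b) \<in> fam_chords i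
     \<or> ((a = 1 \<or> a = 5) \<and> 9 \<le> b \<and> b \<le> n)"
  unfolding fam_base_def by blast

lemma fam_base_cases:
  assumes "(a, b) \<in> fam_base i n"
  obtains "(a, b) \<in> {(1,2), (2,3), (3,4), (4,5), (5,6), (6,7), (7,8), (8,1), (1,4), (1,6), (2,5), (5,8)}"
    | "a = 1 \<or> a = 5" "9 \<le> b" "b \<le> n"
proof -
  have "a \<in> {1..7} \<Longrightarrow> a = 1 \<or> a = 2 \<or> a = 3 \<or> a = 4 \<or> a = 5 \<or> a = 6 \<or> a = 7" by auto
  then show ?thesis
    using assms that unfolding mem_fam_base_iff by (auto dest!: fam_chordsD)
qed

lemma famE_crosses_odd: "famE i n a b \<Longrightarrow> a \<in> {1,3,5,7} \<longleftrightarrow> b \<notin> {1,3,5,7}"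
  unfolding famE_def by (elim disjE fam_base_cases) auto

lemma famE_3: "famE i n 3 b \<Longrightarrow> b = 2 \<or> b = 4"
  and famE_7: "famE i n 7 b \<Longrightarrow> b = 6 \<or> b = 8"
  unfolding famE_def by (elim disjE fam_base_cases; auto)+

lemma famE_extra:
  assumes "a \<le> 8" "9 \<le> b" "b \<le> n"
  shows "famE i n a b \<longleftrightarrow> a = 1 \<or> a = 5"
  using assms unfolding famE_def mem_fam_base_iff by (auto dest: fam_chordsD)

lemma famE_extra_extra: "9 \<le> a \<Longrightarrow> 9 \<le> b \<Longrightarrow> \<not> famE i n a b"
  unfolding famE_def by (auto elim: fam_base_cases)

lemma family_cycle_bound:
  assumes cyc: "is_cycle (famV n) (famE i n) d"
  shows "length d \<le> 8" and "length d = 8 \<Longrightarrow> set d = {1,2,3,4,5,6,7,8}"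
proof -
  let ?Q = "{1,3,5,7::nat}"
  have "\<forall>x y. famE i n x y \<longrightarrow> (x \<in> ?Q \<longleftrightarrow> y \<notin> ?Q)" using famE_crosses_odd by blast
  then have balanced: "card (set d \<inter> ?Q) = card (set d - ?Q)"
    by (rule card_cycle_inter_eq_card_diff[OF cyc])
  moreover have "card (set d \<inter> ?Q) \<le> card ?Q" by (intro card_mono) auto
  ultimately show "length d \<le> 8" using length_cycle_eq_card_sides[OF cyc, of ?Q] by simp
  assume "length d = 8"
  then have "card (set d \<inter> ?Q) = card ?Q"
    using balanced length_cycle_eq_card_sides[OF cyc, of ?Q] by simp
  then have Q: "set d \<inter> ?Q = ?Q" by (intro card_subset_eq) auto
  have "{2,4} \<subseteq> set d" "{6,8} \<subseteq> set d"
    using Q cycle_neighbours[OF cyc _ famE_sym, of 3] cycle_neighbours[OF cyc _ famE_sym, of 7]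
      famE_3 famE_7 by blast+
  then have even: "{2,4,6,8} \<subseteq> set d - ?Q" by auto
  have "card (set d - ?Q) = card {2,4,6,8::nat}"
    using balanced \<open>card (set d \<inter> ?Q) = card ?Q\<close> by simp
  then have "set d - ?Q = {2,4,6,8}" using even by (intro card_subset_eq[symmetric]) auto
  then show "set d = {1,2,3,4,5,6,7,8}" using Q by auto
qed

lemma cc_family:
  assumes "8 \<le> n"
  shows "cc (famV n) (famE i n) = 8"
proof -
  let ?c = "[1,2,3,4,5,6,7,8::nat]"
  have cyc: "is_cycle (famV n) (famE i n) ?c"
    unfolding is_cycle_iff_successively famV_def famE_def fam_base_def using assms by auto
  moreover have "length ?c = 8" by simp
  ultimately have cb: "cummerbund (famV n) (famE i n) ?c"
    unfolding cummerbund_def using family_cycle_bound(1) by metis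
  have "cummerbund_vertices (famV n) (famE i n) = set ?c"
  proof
    show "cummerbund_vertices (famV n) (famE i n) \<subseteq> set ?c"
    proof
      fix v assume "v \<in> cummerbund_vertices (famV n) (famE i n)"
      then obtain d where d: "cummerbund (famV n) (famE i n) d" "v \<in> set d"
        unfolding cummerbund_vertices_def by blast
      then have "is_cycle (famV n) (famE i n) d" "length ?c \<le> length d"
        using cyc unfolding cummerbund_def by blast+
      then have "length d = 8" using family_cycle_bound(1) by (metis le_antisym \<open>length ?c = 8\<close>)
      then show "v \<in> set ?c"
        using family_cycle_bound(2) d(2) \<open>is_cycle (famV n) (famE i n) d\<close> by auto
    qed
  qed (rule set_cummerbund_subset[OF cb])
  then show ?thesis unfolding cc_eq_card_cummerbund_vertices by simp
qed

definition is_graph_iso :: "('a \<Rightarrow> 'b) \<Rightarrow> 'a set \<Rightarrow> ('a \<Rightarrow> 'a \<Rightarrow> bool) \<Rightarrow> 'b set \<Rightarrow> ('b \<Rightarrow> 'b \<Rightarrow> bool) \<Rightarrow> bool"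
  where "is_graph_iso f V E W F \<longleftrightarrow> bij_betw f V W \<and> (\<forall>x\<in>V. \<forall>y\<in>V. E x y \<longleftrightarrow> F (f x) (f y))"

lemma graph_iso_iff: "graph_iso V E W F \<longleftrightarrow> (\<exists>f. is_graph_iso f V E W F)"
  unfolding graph_iso_def is_graph_iso_def ..

lemma is_graph_iso_inv_into:
  assumes "is_graph_iso f V E W F"
  shows "is_graph_iso (inv_into V f) W F V E"
proof -
  have f: "bij_betw f V W" and e: "\<forall>x\<in>V. \<forall>y\<in>V. E x y \<longleftrightarrow> F (f x) (f y)"
    using assms unfolding is_graph_iso_def by auto
  have g: "bij_betw (inv_into V f) W V" using f by (rule bij_betw_inv_into)
  have "F a b \<longleftrightarrow> E (inv_into V f a) (inv_into V f b)" if "a \<in> W" "b \<in> W" for a b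
    using e[rule_format, OF bij_betwE[OF g, rule_format, OF that(1)] bij_betwE[OF g, rule_format, OF that(2)]]
      that f by (simp add: bij_betw_inv_into_right)
  then show ?thesis using g unfolding is_graph_iso_def by blast
qed

lemma is_cycle_map_iso:
  assumes iso: "is_graph_iso f V E W F" and cyc: "is_cycle V E c"
  shows "is_cycle W F (map f c)"
proof -
  have f: "bij_betw f V W" and e: "\<forall>x\<in>V. \<forall>y\<in>V. E x y \<longleftrightarrow> F (f x) (f y)"
    using iso unfolding is_graph_iso_def by auto
  have c: "set c \<subseteq> V" "distinct c" "length c \<ge> 3" "successively E c" "E (last c) (hd c)"
    using cyc unfolding is_cycle_iff_successively by auto
  have "distinct (map f c)" using c(1,2) inj_on_subset[OF bij_betw_imp_inj_on[OF f]]
    by (simp add: distinct_map)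
  moreover have "set (map f c) \<subseteq> W" using bij_betwE[OF f] c(1) by auto
  moreover have "successively F (map f c)"
    unfolding successively_map using c(4) by (rule successively_mono) (use e c(1) in blast)
  moreover have "c \<noteq> []" using c(3) by auto
  then have "last c \<in> V" "hd c \<in> V" using c(1) by auto
  then have "F (last (map f c)) (hd (map f c))"
    using \<open>c \<noteq> []\<close> c(5) e by (simp add: last_map hd_map)
  ultimately show ?thesis using c(3) unfolding is_cycle_iff_successively by simp
qed

lemma cummerbund_map_iso:
  assumes iso: "is_graph_iso f V E W F" and cb: "cummerbund V E c"
  shows "cummerbund W F (map f c)"
  unfolding cummerbund_def
proof (intro conjI allI impI)
  show "is_cycle W F (map f c)" using is_cycle_map_iso[OF iso] cb unfolding cummerbund_def by blast
  fix d assume "is_cycle W F d"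
  then have "is_cycle V E (map (inv_into V f) d)" by (rule is_cycle_map_iso[OF is_graph_iso_inv_into[OF iso]])
  then show "length d \<le> length (map f c)" using cb unfolding cummerbund_def by fastforce
qed

lemma image_cummerbund_vertices_subset:
  assumes iso: "is_graph_iso f V E W F"
  shows "f ` cummerbund_vertices V E \<subseteq> cummerbund_vertices W F"
proof
  fix w assume "w \<in> f ` cummerbund_vertices V E"
  then obtain v c where v: "w = f v" "v \<in> V" "cummerbund V E c" "v \<in> set c"
    unfolding cummerbund_vertices_def by blast
  have "cummerbund W F (map f c)" using cummerbund_map_iso[OF iso v(3)] .
  moreover have "w \<in> W" using v iso bij_betwE unfolding is_graph_iso_def by blast
  ultimately show "w \<in> cummerbund_vertices W F" using v unfolding cummerbund_vertices_def by auto
qed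

lemma graph_iso_cc:
  assumes "graph_iso V E W F"
  shows "cc V E = cc W F"
proof -
  obtain f where iso: "is_graph_iso f V E W F" using assms graph_iso_iff by blast
  then have f: "bij_betw f V W" unfolding is_graph_iso_def by blast
  have "w = f (inv_into V f w)" if "w \<in> cummerbund_vertices W F" for w
    using bij_betw_inv_into_right[OF f, of w] cummerbund_vertices_subset[of W F] that by auto
  then have "cummerbund_vertices W F \<subseteq> f ` inv_into V f ` cummerbund_vertices W F" by blast
  also have "\<dots> \<subseteq> f ` cummerbund_vertices V E"
    using image_cummerbund_vertices_subset[OF is_graph_iso_inv_into[OF iso]] by blast
  finally have "f ` cummerbund_vertices V E = cummerbund_vertices W F"
    using image_cummerbund_vertices_subset[OF iso] by blast
  moreover have "inj_on f (cummerbund_vertices V E)"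
    using bij_betw_imp_inj_on[OF f] cummerbund_vertices_subset by (rule inj_on_subset)
  ultimately show ?thesis unfolding cc_eq_card_cummerbund_vertices by (metis card_image)
qed

lemma bij_betw_extending_list:
  assumes fin: "finite V" and card: "card V = n" and n: "8 \<le> n"
    and l: "length l = 8" "distinct l" "set l \<subseteq> V"
  obtains F where "bij_betw F {1..n} V" "\<And>k. k \<in> {1..8} \<Longrightarrow> F k = l ! (k - 1)"
    "\<And>k. k \<in> {9..n} \<Longrightarrow> F k \<in> V - set l"
proof -
  define X where "X = V - set l"
  have "card X = n - 8"
    using card l distinct_card[OF l(2)] card_Diff_subset[OF finite_subset[OF l(3) fin] l(3)]
    unfolding X_def by simp
  then obtain g where g: "bij_betw g {9..n} X"
    using finite_same_card_bij[of "{9..n}" X] fin unfolding X_def by auto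
  define F where "F k = (if k \<le> 8 then l ! (k - 1) else g k)" for k
  have "bij_betw (\<lambda>k. k - 1) {1..8::nat} {..<8}"
    by (rule bij_betw_byWitness[of _ Suc]) auto
  moreover have "bij_betw ((!) l) {..<8} (set l)" using bij_betw_nth[OF l(2)] l(1) by simp
  ultimately have "bij_betw ((!) l \<circ> (\<lambda>k. k - 1)) {1..8} (set l)" by (rule bij_betw_trans)
  then have low: "bij_betw F {1..8} (set l)"
    by (rule bij_betw_cong[THEN iffD1, rotated]) (simp add: F_def)
  have high: "bij_betw F {9..n} X"
    using g by (rule bij_betw_cong[THEN iffD1, rotated]) (simp add: F_def)
  have "{1..8} \<union> {9..n} = {1..n}" "set l \<union> X = V" using n l(3) unfolding X_def by auto
  then have "bij_betw F {1..n} V" using bij_betw_combine[OF low high] unfolding X_def by auto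
  moreover have "F k \<in> V - set l" if "k \<in> {9..n}" for k
    using that bij_betwE[OF high] unfolding X_def by blast
  ultimately show ?thesis using that unfolding F_def by simp
qed

lemma graph_iso_family_if_octagon:
  assumes simple: "simple_graph V E" and card: "card V = n" and n: "8 \<le> n"
    and l: "length l = 8" "distinct l" "set l \<subseteq> V"
    and inner: "\<forall>p<8. \<forall>q<8. E (l ! p) (l ! q) \<longleftrightarrow> famE i n (p + 1) (q + 1)"
    and outer: "\<forall>z\<in>V - set l. \<forall>v. E z v \<longleftrightarrow> v = l ! 0 \<or> v = l ! 4"
  shows "graph_iso V E (famV n) (famE i n)"
proof -
  obtain F where F: "bij_betw F (famV n) V" and F_low: "\<And>k. k \<in> {1..8} \<Longrightarrow> F k = l ! (k - 1)"
      and F_high: "\<And>k. k \<in> {9..n} \<Longrightarrow> F k \<in> V - set l"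
    using bij_betw_extending_list[OF simple_graph_finite[OF simple] card n l] unfolding famV_def by blast
  have F_l: "F a = l ! 0 \<longleftrightarrow> a = 1" "F a = l ! 4 \<longleftrightarrow> a = 5" if "a \<in> {1..8}" for a
  proof -
    have "F a = l ! (a - 1)" "a - 1 < length l" using that l(1) F_low by auto
    then have "F a = l ! 0 \<longleftrightarrow> a - 1 = 0" "F a = l ! 4 \<longleftrightarrow> a - 1 = 4"
      using nth_eq_iff_index_eq[OF l(2)] l(1) by auto
    then show "F a = l ! 0 \<longleftrightarrow> a = 1" "F a = l ! 4 \<longleftrightarrow> a = 5" using that by auto
  qed
  have E_outer: "E z v \<longleftrightarrow> v = l ! 0 \<or> v = l ! 4" "E v z \<longleftrightarrow> v = l ! 0 \<or> v = l ! 4"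
    if "z \<in> V - set l" for z v
    using that outer simple_graph_sym[OF simple] by blast+
  have "famE i n a b \<longleftrightarrow> E (F a) (F b)" if ab: "a \<in> famV n" "b \<in> famV n" for a b
  proof -
    consider "a \<le> 8" "b \<le> 8" | "a \<le> 8" "9 \<le> b" | "9 \<le> a" "b \<le> 8" | "9 \<le> a" "9 \<le> b"
      by linarith
    then show ?thesis
    proof cases
      case 1
      then show ?thesis using inner ab F_low unfolding famV_def by (auto dest: spec[of _ "a - 1"])
    next
      case 2
      then have "E (F a) (F b) \<longleftrightarrow> a = 1 \<or> a = 5"
        using ab F_l F_high E_outer(2) unfolding famV_def by auto
      then show ?thesis using famE_extra 2 ab unfolding famV_def by auto
    next
      case 3
      then have "E (F a) (F b) \<longleftrightarrow> b = 1 \<or> b = 5"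
        using ab F_l F_high E_outer(1) unfolding famV_def by auto
      then show ?thesis using famE_extra 3 ab famE_sym unfolding famV_def by (metis atLeastAtMost_iff)
    next
      case 4
      then have "F a \<in> V - set l" "F b \<in> V - set l" using ab F_high unfolding famV_def by auto
      moreover have "l ! 0 \<in> set l" "l ! 4 \<in> set l" using l(1) by auto
      ultimately show ?thesis using famE_extra_extra 4 E_outer(1) by (metis DiffD2)
    qed
  qed
  then have "is_graph_iso F (famV n) (famE i n) V E" using F unfolding is_graph_iso_def by blast
  then show ?thesis using is_graph_iso_inv_into graph_iso_iff by blast
qed

section \<open>Chords of the octagon\<close>

definition fam_chord_pattern :: "nat \<Rightarrow> bool \<Rightarrow> bool \<Rightarrow> bool \<Rightarrow> bool \<Rightarrow> bool" where
  "fam_chord_pattern i p q r s \<longleftrightarrow>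
     (p \<longleftrightarrow> (1,4) \<in> fam_chords i) \<and> (q \<longleftrightarrow> (1,6) \<in> fam_chords i) \<and>
     (r \<longleftrightarrow> (2,5) \<in> fam_chords i) \<and> (s \<longleftrightarrow> (5,8) \<in> fam_chords i)"

text \<open>The four optional chords v1v4, v1v6, v2v5, v5v8 are permuted by the reflection
  v(k) to v(2 - k) and the rotation v(k) to v(k + 4) (indices mod 8), which both fix {v1, v5};
  up to these symmetries every choice of the four chords occurs in the family.\<close>

lemma fam_chord_pattern_dihedral:
  "\<exists>i\<in>{1..7}. fam_chord_pattern i p q r s \<or> fam_chord_pattern i q p s r
     \<or> fam_chord_pattern i s r q p \<or> fam_chord_pattern i r s p q"
proof -
  have "{1..7} = {1,2,3,4,5,6,7::nat}" by auto
  then show ?thesis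
    by (cases p; cases q; cases r; cases s) (simp_all add: fam_chord_pattern_def fam_chords_def)
qed

text \<open>The labels a0, ..., a7 stand for v1, ..., v8; x is a vertex off c adjacent to v1 and v5.\<close>

locale labelled_octagon = octagon_core +
  fixes x a0 a1 a2 a3 a4 a5 a6 a7 :: 'a
  assumes c_eq: "c = [a0, a1, a2, a3, a4, a5, a6, a7]"
    and x: "x \<in> V" "x \<notin> set c" "E x a0" "E x a4"
begin

lemma distinct_labels: "distinct [x, a0, a1, a2, a3, a4, a5, a6, a7]"
  using distinct_c c_eq x by simp

lemma labels_in_V: "a0 \<in> V" "a1 \<in> V" "a2 \<in> V" "a3 \<in> V" "a4 \<in> V" "a5 \<in> V" "a6 \<in> V" "a7 \<in> V"
  using set_c_subset c_eq by auto

lemma cycle_edges: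
  "E a0 a1" "E a1 a2" "E a2 a3" "E a3 a4" "E a4 a5" "E a5 a6" "E a6 a7" "E a7 a0"
  "E a1 a0" "E a2 a1" "E a3 a2" "E a4 a3" "E a5 a4" "E a6 a5" "E a7 a6" "E a0 a7"
  using cycle_c c_eq sym unfolding is_cycle_iff_successively by auto

lemma x_edges: "E a0 x" "E a4 x"
  using x sym by auto

lemmas labelled = distinct_labels labels_in_V cycle_edges x x_edges

lemma no_cycle_through_x: "is_cycle V E D \<Longrightarrow> length D = 8 \<Longrightarrow> x \<notin> set D"
  using cycle_length_8_subset x(2) by blast

lemma no_cycle_longer: "is_cycle V E D \<Longrightarrow> 9 \<le> length D \<Longrightarrow> False"
  using cycle_length_le_8 by fastforce

lemma parity_nonchords:
  "\<not> E a0 a2" "\<not> E a0 a4" "\<not> E a0 a6" "\<not> E a1 a3" "\<not> E a1 a5" "\<not> E a1 a7"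
  "\<not> E a2 a4" "\<not> E a2 a6" "\<not> E a3 a5" "\<not> E a3 a7" "\<not> E a4 a6" "\<not> E a5 a7"
proof -
  obtain A where A: "\<forall>x y. E x y \<longrightarrow> (x \<in> A \<longleftrightarrow> y \<notin> A)" using bip unfolding bipartite_def by blast
  have "a0 \<in> A \<longleftrightarrow> a1 \<notin> A" "a1 \<in> A \<longleftrightarrow> a2 \<notin> A" "a2 \<in> A \<longleftrightarrow> a3 \<notin> A" "a3 \<in> A \<longleftrightarrow> a4 \<notin> A"
     "a4 \<in> A \<longleftrightarrow> a5 \<notin> A" "a5 \<in> A \<longleftrightarrow> a6 \<notin> A" "a6 \<in> A \<longleftrightarrow> a7 \<notin> A"
    using A cycle_edges by blast+
  then show "\<not> E a0 a2" "\<not> E a0 a4" "\<not> E a0 a6" "\<not> E a1 a3" "\<not> E a1 a5" "\<not> E a1 a7"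
    "\<not> E a2 a4" "\<not> E a2 a6" "\<not> E a3 a5" "\<not> E a3 a7" "\<not> E a4 a6" "\<not> E a5 a7"
    using A by blast+
qed

text \<open>Each of these chords would close an 8-cycle through x.\<close>

lemma forbidden_chords: "\<not> E a2 a5" "\<not> E a3 a6" "\<not> E a1 a6" "\<not> E a2 a7"
proof -
  show "\<not> E a2 a5"
  proof
    assume e: "E a2 a5"
    then have cyc: "is_cycle V E [x, a0, a7, a6, a5, a2, a3, a4]"
      unfolding is_cycle_iff_successively using labelled e sym[OF e] by auto
    show False using no_cycle_through_x[OF cyc] by simp
  qed
  show "\<not> E a3 a6"
  proof
    assume e: "E a3 a6"
    then have cyc: "is_cycle V E [x, a0, a1, a2, a3, a6, a5, a4]"
      unfolding is_cycle_iff_successively using labelled e sym[OF e] by auto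
    show False using no_cycle_through_x[OF cyc] by simp
  qed
  show "\<not> E a1 a6"
  proof
    assume e: "E a1 a6"
    then have cyc: "is_cycle V E [x, a0, a7, a6, a1, a2, a3, a4]"
      unfolding is_cycle_iff_successively using labelled e sym[OF e] by auto
    show False using no_cycle_through_x[OF cyc] by simp
  qed
  show "\<not> E a2 a7"
  proof
    assume e: "E a2 a7"
    then have cyc: "is_cycle V E [x, a0, a1, a2, a7, a6, a5, a4]"
      unfolding is_cycle_iff_successively using labelled e sym[OF e] by auto
    show False using no_cycle_through_x[OF cyc] by simp
  qed
qed

lemma outside_neighbours_a0_a4:
  assumes y: "y \<in> V" "y \<notin> set c"
  shows "E y v \<longleftrightarrow> v = a0 \<or> v = a4"
proof -
  obtain i where i: "i < 8" "\<And>v. E y v \<longleftrightarrow> v = c ! i \<or> v = c ! ((i + 4) mod 8)"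
    using outside_neighbourhood[OF y] by blast
  have y_ne: "y \<noteq> a0" "y \<noteq> a1" "y \<noteq> a2" "y \<noteq> a3" "y \<noteq> a4" "y \<noteq> a5" "y \<noteq> a6" "y \<noteq> a7"
    using y c_eq by auto
  have "y \<noteq> x" if "i \<noteq> 0" "i \<noteq> 4"
  proof
    assume "y = x"
    then have "a0 = c ! i \<or> a0 = c ! ((i + 4) mod 8)" using i(2) x by blast
    then show False using that less_8_cases[OF i(1)] distinct_labels c_eq by auto
  qed
  moreover have False if "E y a1" "E y a5" "y \<noteq> x"
  proof -
    have cyc: "is_cycle V E [x, a0, a7, a6, a5, y, a1, a2, a3, a4]"
      unfolding is_cycle_iff_successively using labelled that y y_ne sym[OF that(2)] by auto
    show False using no_cycle_longer[OF cyc] by simp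
  qed
  moreover have False if "E y a2" "E y a6" "y \<noteq> x"
  proof -
    have cyc: "is_cycle V E [x, a0, a1, a2, y, a6, a5, a4]"
      unfolding is_cycle_iff_successively using labelled that y y_ne sym[OF that(1)] by auto
    show False using no_cycle_through_x[OF cyc] by simp
  qed
  moreover have False if "E y a3" "E y a7" "y \<noteq> x"
  proof -
    have cyc: "is_cycle V E [x, a0, a1, a2, a3, y, a7, a6, a5, a4]"
      unfolding is_cycle_iff_successively using labelled that y y_ne sym[OF that(1)] by auto
    show False using no_cycle_longer[OF cyc] by simp
  qed
  ultimately show ?thesis using less_8_cases[OF i(1)] i(2) c_eq by (elim disjE) auto
qed

lemma non_adjacent_sym: "\<not> E u v \<Longrightarrow> \<not> E v u"
  using sym by blast

lemma in_family_if_pattern: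
  assumes n: "card V = n" "9 \<le> n" and i: "i \<in> {1..7}"
    and pattern: "fam_chord_pattern i (E a0 a3) (E a0 a5) (E a1 a4) (E a4 a7)"
  shows "in_family_F V E n"
proof -
  have chords: "E a0 a3 \<longleftrightarrow> (1,4) \<in> fam_chords i" "E a0 a5 \<longleftrightarrow> (1,6) \<in> fam_chords i"
      "E a1 a4 \<longleftrightarrow> (2,5) \<in> fam_chords i" "E a4 a7 \<longleftrightarrow> (5,8) \<in> fam_chords i"
    using pattern unfolding fam_chord_pattern_def by simp_all
  then have chords': "E a3 a0 \<longleftrightarrow> (1,4) \<in> fam_chords i" "E a5 a0 \<longleftrightarrow> (1,6) \<in> fam_chords i"
      "E a4 a1 \<longleftrightarrow> (2,5) \<in> fam_chords i" "E a7 a4 \<longleftrightarrow> (5,8) \<in> fam_chords i"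
    using sym by blast+
  have "\<forall>p<8. \<forall>q<8. E (c ! p) (c ! q) \<longleftrightarrow> famE i n (p + 1) (q + 1)"
    unfolding all_less_8 c_eq famE_def mem_fam_base_iff
    using chords chords' cycle_edges parity_nonchords parity_nonchords[THEN non_adjacent_sym]
      forbidden_chords forbidden_chords[THEN non_adjacent_sym]
    by (simp add: irrefl fam_chords_nonchord numeral_2_eq_2[symmetric])
  moreover have "\<forall>z\<in>V - set c. \<forall>v. E z v \<longleftrightarrow> v = c ! 0 \<or> v = c ! 4"
    using outside_neighbours_a0_a4 c_eq by simp
  ultimately have "graph_iso V E (famV n) (famE i n)"
    using graph_iso_family_if_octagon[OF simple n(1) _ length_c distinct_c set_c_subset] n(2) by simp
  then show ?thesis unfolding in_family_F_def using i by blast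
qed

lemma labelled_octagon_reflect:
  "labelled_octagon V E [a0, a7, a6, a5, a4, a3, a2, a1] x a0 a7 a6 a5 a4 a3 a2 a1"
proof -
  have "is_cycle V E [a0, a7, a6, a5, a4, a3, a2, a1]"
    unfolding is_cycle_iff_successively using labelled by auto
  then have "octagon_core V E [a0, a7, a6, a5, a4, a3, a2, a1]"
    by (rule octagon_core_relabel) (auto simp: c_eq)
  then show ?thesis
    unfolding labelled_octagon_def labelled_octagon_axioms_def using x c_eq by auto
qed

lemma labelled_octagon_rotate:
  "labelled_octagon V E [a4, a5, a6, a7, a0, a1, a2, a3] x a4 a5 a6 a7 a0 a1 a2 a3"
proof -
  have "is_cycle V E [a4, a5, a6, a7, a0, a1, a2, a3]"
    unfolding is_cycle_iff_successively using labelled by auto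
  then have "octagon_core V E [a4, a5, a6, a7, a0, a1, a2, a3]"
    by (rule octagon_core_relabel) (auto simp: c_eq)
  then show ?thesis
    unfolding labelled_octagon_def labelled_octagon_axioms_def using x c_eq by auto
qed

lemma labelled_in_family:
  assumes n: "card V = n" "9 \<le> n"
  shows "in_family_F V E n"
proof -
  obtain i where i: "i \<in> {1..7}" and patterns:
    "fam_chord_pattern i (E a0 a3) (E a0 a5) (E a1 a4) (E a4 a7) \<or>
     fam_chord_pattern i (E a0 a5) (E a0 a3) (E a4 a7) (E a1 a4) \<or>
     fam_chord_pattern i (E a4 a7) (E a1 a4) (E a0 a5) (E a0 a3) \<or>
     fam_chord_pattern i (E a1 a4) (E a4 a7) (E a0 a3) (E a0 a5)"
    using fam_chord_pattern_dihedral by blast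
  have sym_iff: "E u v \<longleftrightarrow> E v u" for u v using sym by blast
  note reflect = labelled_octagon_reflect
  note rotate = labelled_octagon_rotate
  note both = labelled_octagon.labelled_octagon_rotate[OF reflect]
  from patterns show ?thesis
  proof (elim disjE)
    assume "fam_chord_pattern i (E a0 a3) (E a0 a5) (E a1 a4) (E a4 a7)"
    then show ?thesis by (rule in_family_if_pattern[OF n i])
  next
    assume "fam_chord_pattern i (E a0 a5) (E a0 a3) (E a4 a7) (E a1 a4)"
    then show ?thesis
      using labelled_octagon.in_family_if_pattern[OF reflect n i] sym_iff[of a7] sym_iff[of a4 a1] by simp
  next
    assume "fam_chord_pattern i (E a4 a7) (E a1 a4) (E a0 a5) (E a0 a3)"
    then show ?thesis
      using labelled_octagon.in_family_if_pattern[OF rotate n i] sym_iff[of a4 a1] sym_iff[of a5] by simp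
  next
    assume "fam_chord_pattern i (E a1 a4) (E a4 a7) (E a0 a3) (E a0 a5)"
    then show ?thesis
      using labelled_octagon.in_family_if_pattern[OF both n i] sym_iff[of a4 a1] sym_iff[of a3] by simp
  qed
qed

end

context octagon_core
begin

lemma in_family:
  assumes n: "card V = n" "9 \<le> n"
  shows "in_family_F V E n"
proof -
  have "card (set c) = 8" using distinct_c length_c distinct_card by metis
  then have "\<not> V \<subseteq> set c" using n card_mono[OF finite_set, of V c] by auto
  then obtain x where x: "x \<in> V" "x \<notin> set c" by blast
  obtain i where i: "i < 8" "\<And>v. E x v \<longleftrightarrow> v = c ! i \<or> v = c ! ((i + 4) mod 8)"
    using outside_neighbourhood[OF x] by blast
  define r where "r = rotate i c"
  have r: "is_cycle V E r" "set r = set c" "length r = 8"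
    using is_cycle_rotate[OF cycle_c] length_c unfolding r_def by auto
  have "r ! 0 = c ! i" "r ! 4 = c ! ((i + 4) mod 8)"
    using nth_rotate[of 0 c i] nth_rotate[of 4 c i] i(1) length_c unfolding r_def by (simp_all add: add.commute)
  then have "E x (r ! 0)" "E x (r ! 4)" using i(2) by auto
  then have "labelled_octagon V E r x (r ! 0) (r ! 1) (r ! 2) (r ! 3) (r ! 4) (r ! 5) (r ! 6) (r ! 7)"
    using octagon_core_relabel[OF r] list_length_8_eq[OF r(3)] x r(2)
    unfolding labelled_octagon_def labelled_octagon_axioms_def by auto
  then show ?thesis using labelled_octagon.labelled_in_family n by metis
qed

end

theorem theorem14:
  fixes V :: "'a set" and E :: "'a \<Rightarrow> 'a \<Rightarrow> bool" and n :: nat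
  assumes "simple_graph V E" and "two_connected V E" and "bipartite V E"
    and "card V = n" and "n \<ge> 9"
  shows "cc V E \<ge> 8 \<and> (cc V E = 8 \<longleftrightarrow> in_family_F V E n)"
proof -
  interpret two_connected_bipartite_graph V E
    using assms(1-3) by unfold_locales
  have "cc V E = 8" if fam: "in_family_F V E n"
  proof -
    obtain i where "graph_iso V E (famV n) (famE i n)" using fam unfolding in_family_F_def by blast
    then have "cc V E = cc (famV n) (famE i n)" by (rule graph_iso_cc)
    then show ?thesis using cc_family assms(5) by simp
  qed
  moreover have "in_family_F V E n" if cc8: "cc V E = 8"
  proof -
    have "9 \<le> card V" using assms(4,5) by simp
    then obtain c where "cummerbund V E c" "length c = 8" "cummerbund_vertices V E = set c"
      using cc_eq_8_cummerbund cc8 by blast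
    then interpret octagon_core V E c by unfold_locales
    show ?thesis using in_family assms(4,5) by blast
  qed
  ultimately show ?thesis using cc_ge_8 assms(4,5) by blast
qed

end
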